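(* For every $\varepsilon>0$ there exists $n_0\in\mathbb{N}$ such that $\int_{Q_n}\tau\,d\mu_n\le 2(1+\varepsilon)n$ for all $n\ge n_0$.
   Context: $\mathbb{F}_2((x^{-1}))$ is the field of formal series $r=\sum_{z\in\mathbb{Z}}a_zx^z$, $a_z\in\mathbb{F}_2$, with $a_z\neq0$ for only finitely many positive $z$ (usual addition and Cauchy multiplication); $\mathbb{F}_2[x]$ is a subring. $\deg(r)=\max\{z: a_z\ne 0\}$. The polynomial part is $[r]=\sum_{z\ge0}a_zx^z\in\mathbb{F}_2[x]$. Define $S(r)=\frac{r}{x+1}$ if $[r](1)=0$ and $S(r)=\frac{xr}{x+1}$ if $[r](1)=1$ (division performed in $\mathbb{F}_2((x^{-1}))$). For $r$ with $\deg(r)\ge0$, $\tau(r)$ is the least $k\in\mathbb{N}$ with $[S^k(r)]=1$ (this is finite). For $n\in\mathbb{N}$, $Q_n=\{r\in\mathbb{F}_2((x^{-1})):\deg(r)=n\}$ and $\mu_n$ is the probability measure on $Q_n$ under which the coefficients $a_{n-1},a_{n-2},a_{n-3},\dots$ of $r$ are independent and uniformly distributed in $\mathbb{F}_2$ (equivalently, twice the restriction to $Q_n$ of the Haar probability measure on the compact additive group $\{r:\deg(r)\le n\}$). *)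

theory Defs
  imports "HOL-Probability.Probability" "HOL-Library.Z2"
    "HOL-Computational_Algebra.Formal_Laurent_Series" "HOL-Computational_Algebra.Polynomial"
begin

text \<open>F2((x^{-1})) is modelled as formal Laurent series in the variable y = x^{-1}
  over the field bit = F2: an element r has coefficient a_z = r $$ (-z) at x^z.
  The element x itself is fls_X_inv.\<close>

type_synonym F2L = "bit fls"

definition xL :: F2L where "xL = fls_X_inv"

definition coeffL :: "F2L \<Rightarrow> int \<Rightarrow> bit" where "coeffL r z = fls_nth r (- z)"

definition degL :: "F2L \<Rightarrow> int" where "degL r = - fls_subdegree r"

definition poly_part :: "F2L \<Rightarrow> bit poly" where
  "poly_part r = Poly (map (\<lambda>n. coeffL r (int n)) [0..<nat (degL r) + 1])"

definition S_map :: "F2L \<Rightarrow> F2L" where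
  "S_map r = (if poly (poly_part r) 1 = 0 then r / (xL + 1) else xL * r / (xL + 1))"

definition tau :: "F2L \<Rightarrow> nat" where
  "tau r = (LEAST k. poly_part ((S_map ^^ k) r) = 1)"

definition Q :: "nat \<Rightarrow> F2L set" where
  "Q n = {r. r \<noteq> 0 \<and> degL r = int n}"

text \<open>coin space: independent fair bits, the i-th bit being the coefficient a_{n-1-i}\<close>
definition coins :: "(nat \<Rightarrow> bool) measure" where
  "coins = PiM UNIV (\<lambda>_. measure_pmf (bernoulli_pmf (1/2)))"

definition embedQ :: "nat \<Rightarrow> (nat \<Rightarrow> bool) \<Rightarrow> F2L" where
  "embedQ n \<omega> = Abs_fls (\<lambda>j. if j = - int n then 1
        else if - int n < j then (if \<omega> (nat (j + int n - 1)) then 1 else 0) else 0)"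

definition mu :: "nat \<Rightarrow> F2L measure" where
  "mu n = embed_measure coins (embedQ n)"

end

theory Submission
  imports Defs
begin

text \<open>
  Only the polynomial part \<open>P\<close> of \<open>r\<close> matters: \<open>S\<close> maps it to \<open>P / (x + 1)\<close> if \<open>P(1) = 0\<close>
  (an even step, lowering the degree by one) and to \<open>(x P + 1) / (x + 1)\<close> otherwise, so
  \<open>\<tau>\<close> is the time needed for \<open>deg P\<close> even steps. The parities of the first \<open>M\<close> steps
  correspond bijectively to \<open>P mod (x + 1)^M\<close>, so for uniform \<open>P\<close> they are independent fair
  coins, and a Chernoff bound makes fewer than \<open>q u\<close> even steps among \<open>(2 q + 1) u\<close> steps
  exponentially rare. Once \<open>j\<close> even steps have occurred after \<open>k\<close> steps, the current
  polynomial is \<open>x^k (P div x^j) div (x + 1)^k\<close>, and these maps permute the polynomials of each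
  degree; this gives a recursion for the number of \<open>P\<close> of degree \<open>n\<close> with
  \<open>\<tau> > (2 + 1/q) n + O(r^2)\<close>, whose solution is \<open>O(n^2 2^n \<theta>^r)\<close> for some \<open>\<theta> < 1\<close>.
  Taking \<open>q \<approx> 1/\<epsilon>\<close> and \<open>r\<close> of order \<open>\<surd>n\<close> gives \<open>E \<tau> \<le> (2 + \<epsilon>) n + o(n)\<close>.
\<close>

section \<open>Division of polynomials over a field\<close>

lemma div_poly_eqI:
  fixes b q r :: "'a::field poly"
  assumes "b \<noteq> 0" and "r = 0 \<or> degree r < degree b"
  shows "(b * q + r) div b = q"
proof -
  have "r div b = 0" using assms(2) by (auto intro: div_poly_less)
  then show ?thesis using assms(1) by (simp add: poly_div_add_left)
qed

lemma degree_div_poly: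
  fixes p d :: "'a::field poly"
  assumes "p \<noteq> 0" "d \<noteq> 0" "degree d \<le> degree p"
  shows "p div d \<noteq> 0" and "degree (p div d) = degree p - degree d"
proof -
  show nz: "p div d \<noteq> 0" using assms by (simp add: div_poly_eq_0_iff)
  have "degree (d * (p div d) + p mod d) = degree (d * (p div d))"
  proof (cases "p mod d = 0")
    case False
    then have "degree (p mod d) < degree (d * (p div d))"
      using degree_mod_less'[OF assms(2) False] nz assms(2) by (simp add: degree_mult_eq)
    then show ?thesis by (rule degree_add_eq_left)
  qed simp
  then show "degree (p div d) = degree p - degree d"
    using nz assms(2) by (simp add: degree_mult_eq)
qed

text \<open>Dividing first by \<open>c\<close> loses only a remainder of degree below \<open>degree c\<close>, which the
  factor \<open>m\<close> cannot lift past \<open>c * d\<close> as long as \<open>degree m \<le> degree d\<close>.\<close>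
lemma mult_div_div_poly:
  fixes m q c d :: "'a::field poly"
  assumes "c \<noteq> 0" "d \<noteq> 0" "degree m \<le> degree d"
  shows "(m * (q div c)) div d = (m * q) div (c * d)"
proof -
  define u r where "u = q div c" and "r = q mod c"
  define u' r' where "u' = (m * u) div d" and "r' = (m * u) mod d"
  have r: "r = 0 \<or> degree r < degree c" and r': "r' = 0 \<or> degree r' < degree d"
    using degree_mod_less assms unfolding r_def r'_def by blast+
  have "m * q = m * (c * u + r)" by (simp only: u_def r_def mult_div_mod_eq)
  also have "\<dots> = c * (m * u) + m * r" by (simp add: algebra_simps)
  also have "m * u = d * u' + r'" by (simp only: u'_def r'_def mult_div_mod_eq)
  finally have eq: "m * q = (c * d) * u' + (c * r' + m * r)" by (simp add: algebra_simps)
  have "c * r' = 0 \<or> degree (c * r') < degree (c * d)"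
    using r' assms by (cases "r' = 0") (auto simp: degree_mult_eq)
  moreover have "m * r = 0 \<or> degree (m * r) < degree (c * d)"
    using r assms by (cases "m = 0 \<or> r = 0") (auto simp: degree_mult_eq)
  ultimately have "c * r' + m * r = 0 \<or> degree (c * r' + m * r) < degree (c * d)"
    using degree_add_le_max[of "c * r'" "m * r"] by auto
  then have "(m * q) div (c * d) = u'"
    unfolding eq using assms by (intro div_poly_eqI) auto
  then show ?thesis by (simp add: u'_def u_def)
qed

lemma mult_div_poly_cancel:
  fixes m d a b :: "'a::field poly"
  assumes "m \<noteq> 0" "d \<noteq> 0" "degree d \<le> degree m" and eq: "(m * a) div d = (m * b) div d"
  shows "a = b"
proof (rule ccontr)
  assume "a \<noteq> b"
  define ra where "ra = (m * a) mod d"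
  define rb where "rb = (m * b) mod d"
  have "m * a - m * b = (d * ((m * b) div d) + ra) - (d * ((m * b) div d) + rb)"
    unfolding ra_def rb_def by (metis eq mult_div_mod_eq)
  then have diff: "m * (a - b) = ra - rb" by (simp add: right_diff_distrib)
  have "m * (a - b) \<noteq> 0" using \<open>a \<noteq> b\<close> assms(1) by simp
  then have nz: "ra - rb \<noteq> 0" using diff by simp
  have "degree m \<le> degree (m * (a - b))"
    using \<open>a \<noteq> b\<close> assms(1) by (simp add: degree_mult_eq)
  moreover have "ra = 0 \<or> degree ra < degree d" "rb = 0 \<or> degree rb < degree d"
    using degree_mod_less[OF assms(2)] unfolding ra_def rb_def by blast+
  then have "degree (ra - rb) < degree d"
    using degree_diff_le_max[of ra rb] nz by auto
  ultimately show False using diff assms(3) by simp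
qed

section \<open>The map \<open>S\<close> on polynomial parts\<close>

definition pX :: "bit poly" where "pX = [:0, 1:]"

definition pX1 :: "bit poly" where "pX1 = [:1, 1:]"

lemma pX_nonzero [simp]: "pX \<noteq> 0" and pX1_nonzero [simp]: "pX1 \<noteq> 0"
  by (simp_all add: pX_def pX1_def)

lemma degree_pX [simp]: "degree pX = 1" and degree_pX1 [simp]: "degree pX1 = 1"
  by (simp_all add: pX_def pX1_def)

lemma poly_pX [simp]: "poly pX a = a" and poly_pX1 [simp]: "poly pX1 a = 1 + a"
  by (simp_all add: pX_def pX1_def)

lemma degree_pX_power [simp]: "degree (pX ^ n) = n"
  and degree_pX1_power [simp]: "degree (pX1 ^ n) = n"
  by (simp_all add: degree_power_eq)

lemma pX1_eq: "pX1 = pX + 1"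
  by (simp add: pX_def pX1_def one_pCons)

lemma bit_poly_add_self [simp]: "p + p = (0 :: bit poly)"
proof (rule poly_eqI)
  fix n
  show "coeff (p + p) n = coeff 0 n" by (simp only: coeff_add coeff_0) (cases "coeff p n"; simp)
qed

lemma bit_poly_two [simp]: "(2 :: bit poly) = 0"
  by (simp only: one_add_one[symmetric] bit_poly_add_self)

lemma bit_poly_add_eq_0_iff: "p + q = 0 \<longleftrightarrow> p = (q :: bit poly)"
proof
  assume "p + q = 0"
  then have "p + q + q = q" by simp
  then show "p = q" by (simp add: add.assoc)
qed simp

lemma pX1_dvd_iff: "pX1 dvd p \<longleftrightarrow> poly p 1 = 0"
  using poly_eq_0_iff_dvd[of p 1] by (simp add: pX1_def)

lemma pX1_power_dvd_cancel_pX_power: "pX1 ^ k dvd pX ^ a * B \<Longrightarrow> pX1 ^ k dvd B"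
proof (induction k arbitrary: B)
  case (Suc k)
  have "pX1 dvd pX1 ^ Suc k" by simp
  then have "pX1 dvd pX ^ a * B" using Suc.prems by (rule dvd_trans)
  then have "pX1 dvd B" by (simp add: pX1_dvd_iff)
  then obtain B' where B': "B = pX1 * B'" by (rule dvdE)
  then have "pX1 * pX1 ^ k dvd pX1 * (pX ^ a * B')" using Suc.prems by (simp add: mult_ac)
  then have "pX1 ^ k dvd pX ^ a * B'" by (subst (asm) dvd_mult_cancel_left) simp
  then have "pX1 ^ k dvd B'" by (rule Suc.IH)
  then show ?case by (simp add: B')
qed simp

definition S_poly :: "bit poly \<Rightarrow> bit poly" where
  "S_poly P = (if poly P 1 = 0 then P div pX1 else (pX * P) div pX1)"

lemma S_poly_eq_div: "S_poly P = (pX ^ (if poly P 1 = 0 then 0 else 1) * P) div pX1"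
  by (simp add: S_poly_def)

lemma pX1_mult_S_poly: "pX1 * S_poly P = (if poly P 1 = 0 then P else pX * P + 1)"
proof (cases "poly P 1 = 0")
  case True
  then show ?thesis by (simp add: S_poly_def pX1_dvd_iff[symmetric])
next
  case False
  then have "pX1 dvd pX * P + 1" by (simp add: pX1_dvd_iff)
  moreover have "(pX * P + 1) div pX1 = (pX * P) div pX1"
    by (simp add: poly_div_add_left div_poly_less)
  ultimately have "pX1 * ((pX * P) div pX1) = pX * P + 1"
    by (metis dvd_mult_div_cancel)
  then show ?thesis using False by (simp add: S_poly_def)
qed

lemma pX_mult_plus_1_nonzero: "pX * P + 1 \<noteq> 0"
proof
  assume "pX * P + 1 = 0"
  then have "poly (pX * P + 1) 0 = 0" by simp
  then show False by simp
qed

lemma S_poly_nonzero: "P \<noteq> 0 \<Longrightarrow> S_poly P \<noteq> 0"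
  using pX1_mult_S_poly[of P] pX_mult_plus_1_nonzero[of P] by (auto split: if_splits)

lemma degree_S_poly:
  assumes "P \<noteq> 0"
  shows "degree (S_poly P) + (if poly P 1 = 0 then 1 else 0) = degree P"
proof -
  have "degree (pX1 * S_poly P) = degree (S_poly P) + 1"
    using S_poly_nonzero[OF assms] by (simp add: degree_mult_eq)
  moreover have "degree (pX * P + 1) = degree P + 1"
    using assms by (subst degree_add_eq_left) (auto simp: degree_mult_eq)
  ultimately show ?thesis using pX1_mult_S_poly[of P] by (simp split: if_splits)
qed

definition parities :: "bit poly \<Rightarrow> nat \<Rightarrow> bit list" where
  "parities P k = map (\<lambda>i. poly ((S_poly ^^ i) P) 1) [0..<k]"

definition even_steps :: "bit poly \<Rightarrow> nat \<Rightarrow> nat" where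
  "even_steps P k = count_list (parities P k) 0"

definition odd_steps :: "bit poly \<Rightarrow> nat \<Rightarrow> nat" where
  "odd_steps P k = count_list (parities P k) 1"

lemma length_parities [simp]: "length (parities P k) = k"
  by (simp add: parities_def)

lemma parities_Suc: "parities P (Suc k) = parities P k @ [poly ((S_poly ^^ k) P) 1]"
  by (simp add: parities_def)

lemma parities_Suc_Cons: "parities P (Suc k) = poly P 1 # parities (S_poly P) k"
proof -
  have "[0..<Suc k] = 0 # map Suc [0..<k]" by (simp add: map_Suc_upt upt_conv_Cons)
  then show ?thesis by (simp add: parities_def funpow_Suc_right funpow_swap1 del: upt_Suc)
qed

lemma even_steps_Suc:
  "even_steps P (Suc k) = even_steps P k + (if poly ((S_poly ^^ k) P) 1 = 0 then 1 else 0)"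
  by (simp add: even_steps_def parities_Suc)

lemma odd_steps_Suc:
  "odd_steps P (Suc k) = odd_steps P k + (if poly ((S_poly ^^ k) P) 1 = 0 then 0 else 1)"
  by (simp add: odd_steps_def parities_Suc)

lemma even_plus_odd_steps: "even_steps P k + odd_steps P k = k"
  by (induction k) (auto simp: even_steps_Suc odd_steps_Suc even_steps_def odd_steps_def
        parities_def)

lemma even_steps_mono: "k \<le> k' \<Longrightarrow> even_steps P k \<le> even_steps P k'"
  by (rule lift_Suc_mono_le[of "even_steps P"]) (simp_all add: even_steps_Suc)

lemma S_poly_iter: "(S_poly ^^ k) P = (pX ^ odd_steps P k * P) div pX1 ^ k"
proof (induction k)
  case 0
  then show ?case by (simp add: odd_steps_def parities_def)
next
  case (Suc k)
  define B e where "B = (S_poly ^^ k) P" and "e = (if poly B 1 = 0 then 0 else 1 :: nat)"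
  have "(S_poly ^^ Suc k) P = (pX ^ e * B) div pX1"
    by (simp add: S_poly_eq_div B_def e_def)
  also have "\<dots> = (pX ^ e * ((pX ^ odd_steps P k * P) div pX1 ^ k)) div pX1"
    by (simp only: B_def Suc.IH)
  also have "\<dots> = (pX ^ e * (pX ^ odd_steps P k * P)) div (pX1 ^ k * pX1)"
    by (rule mult_div_div_poly) (simp_all add: e_def)
  also have "\<dots> = (pX ^ odd_steps P (Suc k) * P) div pX1 ^ Suc k"
    by (simp add: odd_steps_Suc B_def e_def power_add mult.assoc mult.commute)
  finally show ?case .
qed

lemma S_poly_iter_nonzero: "P \<noteq> 0 \<Longrightarrow> (S_poly ^^ k) P \<noteq> 0"
  by (induction k) (simp_all add: S_poly_nonzero)

lemma degree_S_poly_iter: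
  assumes "P \<noteq> 0"
  shows "degree ((S_poly ^^ k) P) + even_steps P k = degree P"
proof (induction k)
  case (Suc k)
  then show ?case
    using degree_S_poly[OF S_poly_iter_nonzero[OF assms, of k]] by (simp add: even_steps_Suc)
qed (simp add: even_steps_def parities_def)

lemma bit_poly_degree_0_eq_1:
  assumes "P \<noteq> 0" "degree P = 0"
  shows "P = (1 :: bit poly)"
proof -
  obtain c where "P = [:c:]" using assms(2) by (rule degree_eq_zeroE)
  then show ?thesis using assms(1) by (simp add: one_pCons)
qed

lemma S_poly_iter_odd_run:
  assumes "\<forall>i<k. poly ((S_poly ^^ i) P) 1 = 1"
  shows "pX1 ^ k * ((S_poly ^^ k) P + 1) = pX ^ k * (P + 1)"
  using assms
proof (induction k)
  case (Suc k)
  define B where "B = (S_poly ^^ k) P"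
  have "pX1 * (S_poly B + 1) = pX * B + 1 + pX1"
    using Suc.prems pX1_mult_S_poly[of B] by (simp add: B_def distrib_left)
  also have "\<dots> = pX * (B + 1)"
    by (simp add: pX1_eq distrib_left add.commute add.left_commute)
  finally have "pX1 ^ Suc k * (S_poly B + 1) = pX * (pX1 ^ k * (B + 1))"
    by (simp add: mult_ac)
  then show ?case using Suc by (simp add: B_def mult_ac)
qed simp

text \<open>A run of \<open>degree P + 1\<close> odd steps would make \<open>(x + 1)^(degree P + 1)\<close> divide
  \<open>x^(degree P + 1) (P + 1)\<close>, hence \<open>P + 1\<close>, which is too small.\<close>
lemma exists_even_step:
  assumes "P \<noteq> 0" "P \<noteq> 1"
  shows "\<exists>i\<le>degree P. poly ((S_poly ^^ i) P) 1 = 0"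
proof (rule ccontr)
  define d where "d = Suc (degree P)"
  assume "\<not> ?thesis"
  then have "\<forall>i<d. poly ((S_poly ^^ i) P) 1 = 1" by (auto simp: d_def)
  then have "pX1 ^ d dvd pX ^ d * (P + 1)"
    by (metis S_poly_iter_odd_run dvd_triv_left)
  then have dvd: "pX1 ^ d dvd P + 1" by (rule pX1_power_dvd_cancel_pX_power)
  have "P + 1 \<noteq> 0" using assms(2) by (simp add: bit_poly_add_eq_0_iff)
  then have "d \<le> degree (P + 1)" using dvd_imp_degree_le[OF dvd] by simp
  moreover have "degree (P + 1) \<le> degree P" using degree_add_le_max[of P 1] by simp
  ultimately show False by (simp add: d_def)
qed

lemma even_steps_reach:
  assumes "P \<noteq> 0"
  shows "e \<le> degree P \<Longrightarrow> \<exists>k\<le>e * (degree P + 1). e \<le> even_steps P k"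
proof (induction e)
  case (Suc e)
  then obtain k where k: "k \<le> e * (degree P + 1)" "e \<le> even_steps P k" by auto
  show ?case
  proof (cases "Suc e \<le> even_steps P k")
    case False
    define B where "B = (S_poly ^^ k) P"
    have "degree B = degree P - e"
      using degree_S_poly_iter[OF assms, of k] False k(2) by (simp add: B_def)
    then have B: "B \<noteq> 0" "B \<noteq> 1" "degree B \<le> degree P"
      using Suc.prems S_poly_iter_nonzero[OF assms] by (auto simp: B_def)
    then obtain i where i: "i \<le> degree B" "poly ((S_poly ^^ i) B) 1 = 0"
      using exists_even_step by blast
    then have "even_steps P (Suc (i + k)) = even_steps P (i + k) + 1"
      by (simp add: even_steps_Suc B_def funpow_add)
    moreover have "even_steps P k \<le> even_steps P (i + k)" by (rule even_steps_mono) simp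
    moreover have "Suc (i + k) \<le> Suc e * (degree P + 1)" using k(1) i(1) B(3) by simp
    ultimately show ?thesis using k(2) by (intro exI[of _ "Suc (i + k)"]) auto
  next
    case True
    moreover have "e * (degree P + 1) \<le> Suc e * (degree P + 1)" by simp
    ultimately show ?thesis using k by (meson order_trans)
  qed
qed simp

lemma S_poly_iter_reaches_1:
  assumes "P \<noteq> 0"
  shows "\<exists>k\<le>(degree P + 1)^2. (S_poly ^^ k) P = 1"
proof -
  obtain k where k: "k \<le> degree P * (degree P + 1)" "degree P \<le> even_steps P k"
    using even_steps_reach[OF assms order_refl] by blast
  then have "degree ((S_poly ^^ k) P) = 0" using degree_S_poly_iter[OF assms, of k] by simp
  then have "(S_poly ^^ k) P = 1"
    using S_poly_iter_nonzero[OF assms] by (simp add: bit_poly_degree_0_eq_1)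
  moreover have "k \<le> (degree P + 1)^2" using k(1) by (simp add: power2_eq_square)
  ultimately show ?thesis by blast
qed

definition tau_poly :: "bit poly \<Rightarrow> nat" where
  "tau_poly P = (LEAST k. (S_poly ^^ k) P = 1)"

lemma tau_poly_le: "(S_poly ^^ k) P = 1 \<Longrightarrow> tau_poly P \<le> k"
  unfolding tau_poly_def by (rule Least_le)

lemma
  assumes "P \<noteq> 0"
  shows S_poly_iter_tau_poly: "(S_poly ^^ tau_poly P) P = 1"
    and tau_poly_le_square: "tau_poly P \<le> (degree P + 1)^2"
proof -
  obtain k where k: "k \<le> (degree P + 1)^2" "(S_poly ^^ k) P = 1"
    using S_poly_iter_reaches_1[OF assms] by blast
  from k(2) show "(S_poly ^^ tau_poly P) P = 1" unfolding tau_poly_def by (rule LeastI)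
  show "tau_poly P \<le> (degree P + 1)^2" using tau_poly_le[OF k(2)] k(1) by simp
qed

lemma tau_poly_shift:
  assumes P: "P \<noteq> 0" and not_1: "\<forall>i<k. (S_poly ^^ i) P \<noteq> 1"
  shows "tau_poly P = k + tau_poly ((S_poly ^^ k) P)"
proof (rule antisym)
  define B where "B = (S_poly ^^ k) P"
  have "B \<noteq> 0" using S_poly_iter_nonzero[OF P] by (simp add: B_def)
  then have "(S_poly ^^ (tau_poly B + k)) P = 1"
    using S_poly_iter_tau_poly by (simp add: B_def funpow_add)
  then show "tau_poly P \<le> k + tau_poly B" using tau_poly_le by (simp add: add.commute)
  have "k \<le> tau_poly P" using not_1 S_poly_iter_tau_poly[OF P] by (meson not_le)
  have "(S_poly ^^ (tau_poly P - k)) B = (S_poly ^^ (tau_poly P - k + k)) P"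
    by (simp add: B_def funpow_add)
  then have "(S_poly ^^ (tau_poly P - k)) B = 1"
    using \<open>k \<le> tau_poly P\<close> S_poly_iter_tau_poly[OF P] by simp
  then show "k + tau_poly B \<le> tau_poly P" using tau_poly_le \<open>k \<le> tau_poly P\<close> by fastforce
qed

section \<open>Splitting off the first even steps\<close>

definition even_time :: "bit poly \<Rightarrow> nat \<Rightarrow> nat" where
  "even_time P j = (LEAST k. even_steps P k = j)"

lemma even_steps_hits:
  "j \<le> even_steps P k \<Longrightarrow> \<exists>k'\<le>k. even_steps P k' = j"
proof (induction k)
  case (Suc k)
  show ?case
  proof (cases "j \<le> even_steps P k")
    case True
    then show ?thesis using Suc.IH le_Suc_eq by blast
  next
    case False
    then have "even_steps P (Suc k) = j" using Suc.prems
      by (simp add: even_steps_Suc split: if_splits)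
    then show ?thesis by blast
  qed
qed (simp add: even_steps_def parities_def)

lemma
  assumes "P \<noteq> 0" "j \<le> degree P"
  shows even_steps_even_time: "even_steps P (even_time P j) = j"
    and less_even_time_iff: "M < even_time P j \<longleftrightarrow> even_steps P M < j"
proof -
  obtain k where "degree P \<le> even_steps P k"
    using even_steps_reach[OF assms(1) order_refl] by blast
  then have "\<exists>k. even_steps P k = j" using even_steps_hits assms(2) by (meson order_trans)
  then show hit: "even_steps P (even_time P j) = j" unfolding even_time_def by (rule LeastI_ex)
  show "M < even_time P j \<longleftrightarrow> even_steps P M < j"
  proof
    assume "M < even_time P j"
    then show "even_steps P M < j"
      using even_steps_hits[of j P M] not_less_Least[of _ "\<lambda>k. even_steps P k = j"]
      unfolding even_time_def by (meson le_less_trans not_le)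
  next
    assume "even_steps P M < j"
    then show "M < even_time P j" using even_steps_mono[of "even_time P j" M P] hit by linarith
  qed
qed

definition xdiv :: "nat \<Rightarrow> bit poly \<Rightarrow> bit poly" where
  "xdiv s A = (pX ^ s * A) div pX1 ^ s"

lemma S_poly_iter_eq_xdiv:
  assumes "even_steps P k = j"
  shows "(S_poly ^^ k) P = xdiv k (P div pX ^ j)"
proof -
  have odd: "odd_steps P k = k - j" and "j \<le> k"
    using even_plus_odd_steps[of P k] assms by auto
  have "xdiv k (P div pX ^ j) = (pX ^ k * P) div (pX ^ j * pX1 ^ k)"
    unfolding xdiv_def by (rule mult_div_div_poly) simp_all
  also have "\<dots> = (pX ^ j * (pX ^ (k - j) * P)) div (pX ^ j * pX1 ^ k)"
    using \<open>j \<le> k\<close> by (simp flip: mult.assoc power_add)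
  also have "\<dots> = (S_poly ^^ k) P" by (simp add: S_poly_iter odd)
  finally show ?thesis ..
qed

text \<open>Once \<open>j\<close> even steps are done, the low \<open>j\<close> coefficients of \<open>P\<close> no longer matter.\<close>
lemma tau_poly_split:
  assumes P: "P \<noteq> 0" and j: "j \<le> degree P"
  shows "tau_poly P = even_time P j + tau_poly (xdiv (even_time P j) (P div pX ^ j))"
proof -
  have "(S_poly ^^ i) P \<noteq> 1" if "i < even_time P j" for i
  proof -
    have "even_steps P i < j" using that less_even_time_iff[OF P j] by simp
    then have "degree ((S_poly ^^ i) P) \<noteq> 0" using degree_S_poly_iter[OF P, of i] j by simp
    then show ?thesis by auto
  qed
  then have "tau_poly P = even_time P j + tau_poly ((S_poly ^^ even_time P j) P)"
    by (intro tau_poly_shift[OF P]) blast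
  then show ?thesis using S_poly_iter_eq_xdiv[OF even_steps_even_time[OF P j]] by simp
qed

lemma xdiv_xdiv: "xdiv a (xdiv b A) = xdiv (a + b) A"
proof -
  have "xdiv a (xdiv b A) = (pX ^ a * (pX ^ b * A)) div (pX1 ^ b * pX1 ^ a)"
    unfolding xdiv_def by (rule mult_div_div_poly) simp_all
  then show ?thesis by (simp add: xdiv_def power_add mult_ac)
qed

lemma xdiv_div_pX_power: "xdiv s A div pX ^ j = xdiv s (A div pX ^ j)"
proof -
  have "xdiv s (A div pX ^ j) = (pX ^ s * A) div (pX ^ j * pX1 ^ s)"
    unfolding xdiv_def by (rule mult_div_div_poly) simp_all
  moreover have "xdiv s A div pX ^ j = (pX ^ s * A) div (pX1 ^ s * pX ^ j)"
    by (simp add: xdiv_def poly_div_mult_right)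
  ultimately show ?thesis by (simp add: mult.commute)
qed

lemma xdiv_cancel: "xdiv s A = xdiv s B \<Longrightarrow> A = B"
  unfolding xdiv_def by (rule mult_div_poly_cancel) simp_all

lemma
  assumes "A \<noteq> 0"
  shows xdiv_nonzero: "xdiv s A \<noteq> 0" and degree_xdiv: "degree (xdiv s A) = degree A"
  using degree_div_poly[of "pX ^ s * A" "pX1 ^ s"] assms by (simp_all add: xdiv_def degree_mult_eq)

section \<open>Counting polynomials\<close>

lemma UNIV_bit: "(UNIV :: bit set) = {0, 1}"
  using bit_not_zero_iff by blast

lemma finite_UNIV_bit [simp]: "finite (UNIV :: bit set)"
  by (simp add: UNIV_bit)

lemma card_filter_bij_betw_fst:
  assumes "bij_betw f A (B \<times> C)"
  shows "card {a \<in> A. \<phi> (fst (f a))} = card {b \<in> B. \<phi> b} * card C"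
proof -
  have "f ` {a \<in> A. \<phi> (fst (f a))} = {y \<in> f ` A. \<phi> (fst y)}" by auto
  also have "\<dots> = {b \<in> B. \<phi> b} \<times> C" using assms by (auto simp: bij_betw_def)
  finally have "f ` {a \<in> A. \<phi> (fst (f a))} = {b \<in> B. \<phi> b} \<times> C" .
  then have "bij_betw f {a \<in> A. \<phi> (fst (f a))} ({b \<in> B. \<phi> b} \<times> C)"
    using assms by (auto intro: bij_betw_subset)
  then show ?thesis by (simp add: bij_betw_same_card card_cartesian_product)
qed

lemma card_filter_bij_betw_snd:
  assumes "bij_betw f A (B \<times> C)"
  shows "card {a \<in> A. \<phi> (snd (f a))} = card B * card {c \<in> C. \<phi> c}"
proof -
  have "f ` {a \<in> A. \<phi> (snd (f a))} = {y \<in> f ` A. \<phi> (snd y)}" by auto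
  also have "\<dots> = B \<times> {c \<in> C. \<phi> c}" using assms by (auto simp: bij_betw_def)
  finally have "f ` {a \<in> A. \<phi> (snd (f a))} = B \<times> {c \<in> C. \<phi> c}" .
  then have "bij_betw f {a \<in> A. \<phi> (snd (f a))} (B \<times> {c \<in> C. \<phi> c})"
    using assms by (auto intro: bij_betw_subset)
  then show ?thesis by (simp add: bij_betw_same_card card_cartesian_product)
qed

definition polys_of_degree :: "nat \<Rightarrow> bit poly set" where
  "polys_of_degree n = {P. P \<noteq> 0 \<and> degree P = n}"

definition polys_degree_less :: "nat \<Rightarrow> bit poly set" where
  "polys_degree_less k = {P. P = 0 \<or> degree P < k}"

lemma polys_degree_less_Suc:
  "polys_degree_less (Suc k) = (\<lambda>(a, p). pCons a p) ` (UNIV \<times> polys_degree_less k)"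
proof -
  have mem: "P \<in> polys_degree_less (Suc k) \<longleftrightarrow> (\<exists>a p. P = pCons a p \<and> p \<in> polys_degree_less k)" for P
    by (cases P) (auto simp: polys_degree_less_def degree_pCons_eq_if split: if_splits)
  show ?thesis by (rule set_eqI) (auto simp: mem image_iff)
qed

lemma finite_polys_degree_less [simp]: "finite (polys_degree_less k)"
  and card_polys_degree_less: "card (polys_degree_less k) = 2 ^ k"
proof -
  have "finite (polys_degree_less k) \<and> card (polys_degree_less k) = 2 ^ k"
  proof (induction k)
    case 0
    have "polys_degree_less 0 = {0}" by (auto simp: polys_degree_less_def)
    then show ?case by simp
  next
    case (Suc k)
    have "inj_on (\<lambda>(a, p). pCons a p) (UNIV \<times> polys_degree_less k)"
      by (auto simp: inj_on_def)
    moreover have "card (UNIV :: bit set) = 2" by (simp add: UNIV_bit)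
    ultimately show ?case using Suc
      by (simp add: polys_degree_less_Suc card_image card_cartesian_product)
  qed
  then show "finite (polys_degree_less k)" "card (polys_degree_less k) = 2 ^ k" by blast+
qed

lemma polys_of_degree_eq: "polys_of_degree n = polys_degree_less (Suc n) - polys_degree_less n"
  by (auto simp: polys_of_degree_def polys_degree_less_def)

lemma finite_polys_of_degree [simp]: "finite (polys_of_degree n)"
  by (simp add: polys_of_degree_eq)

lemma card_polys_of_degree: "card (polys_of_degree n) = 2 ^ n"
proof -
  have "polys_degree_less n \<subseteq> polys_degree_less (Suc n)" by (auto simp: polys_degree_less_def)
  then show ?thesis by (simp add: polys_of_degree_eq card_Diff_subset card_polys_degree_less)
qed

lemma bij_betw_divmod:
  assumes "D \<noteq> 0" "degree D \<le> n"
  shows "bij_betw (\<lambda>P. (P div D, P mod D)) (polys_of_degree n)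
           (polys_of_degree (n - degree D) \<times> polys_degree_less (degree D))"
proof (rule bij_betw_byWitness[where f' = "\<lambda>(q, r). D * q + r"])
  have deg: "degree (D * q + r) = degree D + degree q"
    if "q \<noteq> 0" "r = 0 \<or> degree r < degree D" for q r
  proof (cases "r = 0")
    case False
    then have "degree r < degree (D * q)" using that assms(1) by (simp add: degree_mult_eq)
    then show ?thesis using that assms(1) by (simp add: degree_add_eq_left degree_mult_eq)
  qed (use that assms(1) in \<open>simp add: degree_mult_eq\<close>)
  show "\<forall>P\<in>polys_of_degree n. (\<lambda>(q, r). D * q + r) (P div D, P mod D) = P" by simp
  show "\<forall>qr\<in>polys_of_degree (n - degree D) \<times> polys_degree_less (degree D).
          (\<lambda>P. (P div D, P mod D)) ((\<lambda>(q, r). D * q + r) qr) = qr"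
    using assms(1)
    by (auto simp: polys_degree_less_def div_poly_eqI poly_mod_add_left mod_poly_less
        div_poly_eq_0_iff)
  show "(\<lambda>P. (P div D, P mod D)) ` polys_of_degree n
          \<subseteq> polys_of_degree (n - degree D) \<times> polys_degree_less (degree D)"
  proof (rule image_subsetI)
    fix P assume P: "P \<in> polys_of_degree n"
    have r: "P mod D = 0 \<or> degree (P mod D) < degree D" using degree_mod_less[OF assms(1)] .
    have q: "P div D \<noteq> 0" using P assms by (auto simp: polys_of_degree_def div_poly_eq_0_iff)
    moreover have "degree P = degree D + degree (P div D)"
      using deg[OF q r] by simp
    ultimately show
      "(P div D, P mod D) \<in> polys_of_degree (n - degree D) \<times> polys_degree_less (degree D)"
      using P r by (auto simp: polys_of_degree_def polys_degree_less_def)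
  qed
  show "(\<lambda>(q, r). D * q + r) ` (polys_of_degree (n - degree D) \<times> polys_degree_less (degree D))
          \<subseteq> polys_of_degree n"
  proof (rule image_subsetI, clarify)
    fix q r assume "q \<in> polys_of_degree (n - degree D)" "r \<in> polys_degree_less (degree D)"
    then show "D * q + r \<in> polys_of_degree n"
      using deg[of q r] assms by (auto simp: polys_of_degree_def polys_degree_less_def)
  qed
qed

lemma card_polys_of_degree_mod_filter:
  assumes "D \<noteq> 0" "degree D \<le> n"
  shows "card {P \<in> polys_of_degree n. \<phi> (P mod D)}
           = 2 ^ (n - degree D) * card {r \<in> polys_degree_less (degree D). \<phi> r}"
  using card_filter_bij_betw_snd[OF bij_betw_divmod[OF assms], of \<phi>]
  by (simp add: card_polys_of_degree)

lemma card_polys_of_degree_div_filter: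
  assumes "D \<noteq> 0" "degree D \<le> n"
  shows "card {P \<in> polys_of_degree n. \<phi> (P div D)}
           = card {q \<in> polys_of_degree (n - degree D). \<phi> q} * 2 ^ degree D"
  using card_filter_bij_betw_fst[OF bij_betw_divmod[OF assms], of \<phi>]
  by (simp add: card_polys_degree_less)

lemma S_poly_add_same_parity:
  assumes "poly P 1 = poly P' 1"
  shows "pX1 * (S_poly P + S_poly P') = pX ^ (if poly P 1 = 0 then 0 else 1) * (P + P')"
  using pX1_mult_S_poly[of P] pX1_mult_S_poly[of P'] assms by (simp add: algebra_simps)

lemma parities_eq_iff_dvd: "parities P M = parities P' M \<longleftrightarrow> pX1 ^ M dvd P + P'"
proof (induction M arbitrary: P P')
  case 0
  then show ?case by (simp add: parities_def)
next
  case (Suc M)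
  show ?case
  proof (cases "poly P 1 = poly P' 1")
    case True
    define e :: nat where "e = (if poly P 1 = 0 then 0 else 1)"
    have "pX1 ^ Suc M dvd P + P' \<longleftrightarrow> pX1 ^ Suc M dvd pX ^ e * (P + P')"
      using pX1_power_dvd_cancel_pX_power[of "Suc M" e "P + P'"] dvd_mult by blast
    also have "pX ^ e * (P + P') = pX1 * (S_poly P + S_poly P')"
      using S_poly_add_same_parity[OF True] by (simp add: e_def)
    also have "pX1 ^ Suc M dvd pX1 * (S_poly P + S_poly P') \<longleftrightarrow> pX1 ^ M dvd S_poly P + S_poly P'"
      by simp
    finally show ?thesis using True Suc.IH by (simp add: parities_Suc_Cons)
  next
    case False
    then have "\<not> pX1 dvd P + P'"
      by (cases "poly P 1"; cases "poly P' 1") (simp_all add: pX1_dvd_iff)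
    then have "\<not> pX1 ^ Suc M dvd P + P'" by (metis dvd_trans dvd_triv_left power_Suc)
    then show ?thesis using False by (simp add: parities_Suc_Cons)
  qed
qed

lemma parities_mod: "parities (P mod pX1 ^ M) M = parities P M"
proof -
  have "P mod pX1 ^ M + P = pX1 ^ M * (P div pX1 ^ M) + (P mod pX1 ^ M + P mod pX1 ^ M)"
    by (metis add.left_commute mult_div_mod_eq)
  then show ?thesis by (simp add: parities_eq_iff_dvd)
qed

lemma inj_on_parities: "inj_on (\<lambda>P. parities P M) (polys_degree_less M)"
proof (rule inj_onI)
  fix P P' assume "P \<in> polys_degree_less M" "P' \<in> polys_degree_less M"
    and "parities P M = parities P' M"
  then have "pX1 ^ M dvd P + P'" and "P + P' = 0 \<or> degree (P + P') < M"
    using degree_add_le_max[of P P'] by (auto simp: parities_eq_iff_dvd polys_degree_less_def)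
  then have "P + P' = 0" using dvd_imp_degree_le by fastforce
  then show "P = P'" by (simp add: bit_poly_add_eq_0_iff)
qed

lemma card_few_even_steps_le_lists:
  assumes "M \<le> n"
  shows "card {P \<in> polys_of_degree n. even_steps P M < j}
           \<le> 2 ^ (n - M) * card {v :: bit list. length v = M \<and> count_list v 0 < j}"
proof -
  have "card {P \<in> polys_of_degree n. even_steps P M < j}
      = 2 ^ (n - M) * card {r \<in> polys_degree_less M. count_list (parities r M) 0 < j}"
    using card_polys_of_degree_mod_filter[of "pX1 ^ M" n "\<lambda>r. count_list (parities r M) 0 < j"]
      assms by (simp add: parities_mod even_steps_def)
  also have "card {r \<in> polys_degree_less M. count_list (parities r M) 0 < j}
      \<le> card {v :: bit list. length v = M \<and> count_list v 0 < j}"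
  proof (rule card_inj_on_le)
    show "inj_on (\<lambda>P. parities P M) {r \<in> polys_degree_less M. count_list (parities r M) 0 < j}"
      using inj_on_parities by (rule inj_on_subset) auto
    have "finite {v :: bit list. set v \<subseteq> UNIV \<and> length v = M}"
      by (rule finite_lists_length_eq) simp
    then show "finite {v :: bit list. length v = M \<and> count_list v 0 < j}"
      by (rule finite_subset[rotated]) auto
  qed auto
  finally show ?thesis by simp
qed

lemma bit_lists_Suc:
  "{v :: bit list. length v = Suc M} = (\<lambda>(b, v). b # v) ` (UNIV \<times> {v. length v = M})"
  by (auto simp: length_Suc_conv)

lemma sum_bit_lists_power_count_0:
  "(\<Sum>v\<in>{v :: bit list. length v = M}. (\<mu> :: real) ^ count_list v 0) = (1 + \<mu>) ^ M"
proof (induction M)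
  case 0
  then show ?case by simp
next
  case (Suc M)
  have "inj_on (\<lambda>(b, v). b # v) (UNIV \<times> {v :: bit list. length v = M})"
    by (auto simp: inj_on_def)
  then have "(\<Sum>v\<in>{v :: bit list. length v = Suc M}. \<mu> ^ count_list v 0)
      = (\<Sum>x\<in>UNIV \<times> {v :: bit list. length v = M}. \<mu> ^ count_list (fst x # snd x) 0)"
    unfolding bit_lists_Suc by (subst sum.reindex) (simp_all add: case_prod_beta)
  also have "\<dots> = (\<Sum>b\<in>UNIV. \<Sum>v\<in>{v :: bit list. length v = M}. \<mu> ^ count_list (b # v) 0)"
    by (subst sum.cartesian_product) (simp add: case_prod_beta)
  also have "\<dots> = (1 + \<mu>) * (\<Sum>v\<in>{v :: bit list. length v = M}. \<mu> ^ count_list v 0)"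
    by (simp add: UNIV_bit sum_distrib_left algebra_simps flip: sum.distrib)
  finally show ?case using Suc by simp
qed

text \<open>Chernoff's trick: weight each list with \<open>\<beta> ^ (j - count_list v 0) \<ge> 1\<close>.\<close>
lemma card_bit_lists_few_zeros:
  assumes "\<beta> \<ge> 1"
  shows "real (card {v :: bit list. length v = M \<and> count_list v 0 < j}) \<le> \<beta> ^ j * (1 + 1 / \<beta>) ^ M"
proof -
  let ?S = "{v :: bit list. length v = M \<and> count_list v 0 < j}"
  have fin: "finite {v :: bit list. length v = M}"
    using finite_lists_length_eq[of "UNIV :: bit set" M] by simp
  have "real (card ?S) = (\<Sum>v\<in>?S. 1)" by simp
  also have "\<dots> \<le> (\<Sum>v\<in>?S. \<beta> ^ j * (1 / \<beta>) ^ count_list v 0)"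
  proof (rule sum_mono)
    fix v assume "v \<in> ?S"
    then have "\<beta> ^ j * (1 / \<beta>) ^ count_list v 0 = \<beta> ^ (j - count_list v 0)"
      using assms by (simp add: power_one_over power_diff)
    then show "1 \<le> \<beta> ^ j * (1 / \<beta>) ^ count_list v 0" using assms by simp
  qed
  also have "\<dots> \<le> (\<Sum>v\<in>{v :: bit list. length v = M}. \<beta> ^ j * (1 / \<beta>) ^ count_list v 0)"
    by (rule sum_mono2[OF fin]) (use assms in auto)
  also have "\<dots> = \<beta> ^ j * (1 + 1 / \<beta>) ^ M"
    by (simp add: sum_bit_lists_power_count_0 flip: sum_distrib_left)
  finally show ?thesis .
qed

lemma card_few_even_steps:
  assumes "M \<le> n" "\<beta> \<ge> 1"
  shows "real (card {P \<in> polys_of_degree n. even_steps P M < j})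
           \<le> 2 ^ n * (\<beta> ^ j * ((1 + 1 / \<beta>) / 2) ^ M)"
proof -
  have "real (card {P \<in> polys_of_degree n. even_steps P M < j})
      \<le> real (2 ^ (n - M) * card {v :: bit list. length v = M \<and> count_list v 0 < j})"
    using card_few_even_steps_le_lists[OF assms(1), of j] by (simp only: of_nat_le_iff)
  also have "\<dots> \<le> 2 ^ (n - M) * (\<beta> ^ j * (1 + 1 / \<beta>) ^ M)"
    using card_bit_lists_few_zeros[OF assms(2)] by simp
  also have "\<dots> = 2 ^ n * (\<beta> ^ j * ((1 + 1 / \<beta>) / 2) ^ M)"
    using assms(1) by (simp add: power_divide power_diff)
  finally show ?thesis .
qed

lemma xdiv_polys_of_degree: "A \<in> polys_of_degree n \<Longrightarrow> xdiv s A \<in> polys_of_degree n"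
  by (simp add: polys_of_degree_def xdiv_nonzero degree_xdiv)

lemma card_polys_of_degree_xdiv_filter:
  "card {A \<in> polys_of_degree n. \<phi> (xdiv s A)} = card {B \<in> polys_of_degree n. \<phi> B}"
proof -
  have inj: "inj_on (xdiv s) (polys_of_degree n)" by (auto intro: inj_onI xdiv_cancel)
  then have "xdiv s ` polys_of_degree n = polys_of_degree n"
    by (intro card_subset_eq) (auto simp: card_image xdiv_polys_of_degree)
  then have "xdiv s ` {A \<in> polys_of_degree n. \<phi> (xdiv s A)} = {B \<in> polys_of_degree n. \<phi> B}"
    by auto
  moreover have "inj_on (xdiv s) {A \<in> polys_of_degree n. \<phi> (xdiv s A)}"
    using inj by (rule inj_on_subset) auto
  ultimately show ?thesis by (metis card_image)
qed

lemma div_pX_power_polys_of_degree: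
  assumes "A \<in> polys_of_degree n" "j \<le> n"
  shows "A div pX ^ j \<in> polys_of_degree (n - j)"
  using assms degree_div_poly[of A "pX ^ j"] by (simp add: polys_of_degree_def)

section \<open>The recursive estimate\<close>

text \<open>The shifts \<open>xdiv s\<close>, \<open>s < W\<close>, absorb the unknown time at which the first \<open>j\<close> even
  steps are completed (see \<open>tau_poly_split\<close>); since each of them permutes
  \<open>polys_of_degree n\<close>, they cost only a factor \<open>W\<close> in the count.\<close>
definition slow :: "nat \<Rightarrow> nat \<Rightarrow> real \<Rightarrow> bit poly set" where
  "slow n W t = {A \<in> polys_of_degree n. \<exists>s<W. t < real (tau_poly (xdiv s A))}"

lemma tau_poly_le_square_polys_of_degree:
  "A \<in> polys_of_degree n \<Longrightarrow> tau_poly A \<le> (n + 1)^2"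
  using tau_poly_le_square by (auto simp: polys_of_degree_def)

lemma slow_eq_empty:
  assumes "real ((n + 1)^2) \<le> t"
  shows "slow n W t = {}"
proof -
  have "\<not> t < real (tau_poly (xdiv s A))" if "A \<in> polys_of_degree n" for A s
    using tau_poly_le_square_polys_of_degree[OF xdiv_polys_of_degree[OF that]] assms
    by (meson not_less of_nat_le_iff order_trans)
  then show ?thesis by (auto simp: slow_def)
qed

lemma slow_subset:
  assumes "j \<le> M" "M \<le> n"
  shows "slow n W (real M + t) \<subseteq>
           (\<Union>s<W. {A \<in> polys_of_degree n. even_steps (xdiv s A) M < j})
           \<union> {A \<in> polys_of_degree n. A div pX ^ j \<in> slow (n - j) (W + M) t}"
proof
  fix A assume "A \<in> slow n W (real M + t)"
  then obtain s where A: "A \<in> polys_of_degree n" and "s < W"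
    and slow: "real M + t < real (tau_poly (xdiv s A))"
    by (auto simp: slow_def)
  define B where "B = xdiv s A"
  define k where "k = even_time B j"
  have B: "B \<noteq> 0" "j \<le> degree B"
    using xdiv_polys_of_degree[OF A] assms by (auto simp: B_def polys_of_degree_def)
  have tau: "tau_poly B = k + tau_poly (xdiv (k + s) (A div pX ^ j))"
    using tau_poly_split[OF B] by (simp add: B_def k_def xdiv_div_pX_power xdiv_xdiv)
  show "A \<in> (\<Union>s<W. {A \<in> polys_of_degree n. even_steps (xdiv s A) M < j})
           \<union> {A \<in> polys_of_degree n. A div pX ^ j \<in> slow (n - j) (W + M) t}"
  proof (cases "k \<le> M")
    case True
    then have "t < real (tau_poly (xdiv (k + s) (A div pX ^ j)))" and "k + s < W + M"
      using slow tau \<open>s < W\<close> by (simp_all add: B_def k_def)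
    moreover have "A div pX ^ j \<in> polys_of_degree (n - j)"
      using div_pX_power_polys_of_degree[OF A] assms by simp
    ultimately show ?thesis using A by (auto simp: slow_def)
  next
    case False
    then have "even_steps B M < j" using less_even_time_iff[OF B, of M] by (simp add: k_def)
    then show ?thesis using A \<open>s < W\<close> by (auto simp: B_def k_def)
  qed
qed

lemma card_slow_recursion:
  assumes "j \<le> M" "M \<le> n"
  shows "card (slow n W (real M + t))
           \<le> W * card {B \<in> polys_of_degree n. even_steps B M < j}
               + 2 ^ j * card (slow (n - j) (W + M) t)"
proof -
  have "card (slow n W (real M + t))
      \<le> card (\<Union>s<W. {A \<in> polys_of_degree n. even_steps (xdiv s A) M < j})
         + card {A \<in> polys_of_degree n. A div pX ^ j \<in> slow (n - j) (W + M) t}"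
    by (rule order_trans[OF card_mono[OF _ slow_subset[OF assms]] card_Un_le]) auto
  also have "card (\<Union>s<W. {A \<in> polys_of_degree n. even_steps (xdiv s A) M < j})
      \<le> (\<Sum>s<W. card {A \<in> polys_of_degree n. even_steps (xdiv s A) M < j})"
    by (rule card_UN_le) simp
  also have "\<dots> = W * card {B \<in> polys_of_degree n. even_steps B M < j}"
    by (simp add: card_polys_of_degree_xdiv_filter[where \<phi> = "\<lambda>B. even_steps B M < j"])
  also have "card {A \<in> polys_of_degree n. A div pX ^ j \<in> slow (n - j) (W + M) t}
      = 2 ^ j * card (slow (n - j) (W + M) t)"
    using card_polys_of_degree_div_filter[of "pX ^ j" n "\<lambda>B. B \<in> slow (n - j) (W + M) t"] assms
    by (simp add: Collect_conj_eq Int_absorb1 slow_def)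
  finally show ?thesis by simp
qed

lemma sum_le_threshold:
  fixes f :: "'a \<Rightarrow> real"
  assumes "finite A" "t \<ge> 0" "\<And>x. x \<in> A \<Longrightarrow> f x \<le> B"
  shows "(\<Sum>x\<in>A. f x) \<le> real (card A) * t + real (card {x \<in> A. t < f x}) * B"
proof -
  have "(\<Sum>x\<in>A. f x) = (\<Sum>x\<in>{x \<in> A. f x \<le> t}. f x) + (\<Sum>x\<in>{x \<in> A. t < f x}. f x)"
    using assms(1) by (subst sum.union_disjoint[symmetric]) (auto intro: sum.cong)
  also have "(\<Sum>x\<in>{x \<in> A. f x \<le> t}. f x) \<le> real (card {x \<in> A. f x \<le> t}) * t"
    using sum_bounded_above[of "{x \<in> A. f x \<le> t}" f t] by simp
  also have "\<dots> \<le> real (card A) * t"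
    using assms(1,2) by (intro mult_right_mono) (auto intro: card_mono)
  also have "(\<Sum>x\<in>{x \<in> A. t < f x}. f x) \<le> real (card {x \<in> A. t < f x}) * B"
    using sum_bounded_above[of "{x \<in> A. t < f x}" f B] assms(3) by simp
  finally show ?thesis by simp
qed

locale decay_parameters =
  fixes q :: nat and \<beta> :: real and r :: nat
  assumes q_pos: "1 \<le> q" and \<beta>: "1 \<le> \<beta>" and r_pos: "1 \<le> r"
    and decay: "\<beta> ^ q * ((1 + 1 / \<beta>) / 2) ^ (2 * q + 1) \<le> 1"
begin

definition K :: nat where "K = 2 * q + 1"

definition \<theta> :: real where "\<theta> = \<beta> ^ q * ((1 + 1 / \<beta>) / 2) ^ K"

definition budget :: "nat \<Rightarrow> real" where "budget n = real K / real q * real n + real (K * r) ^ 2"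

lemma K_pos: "0 < K"
  by (simp add: K_def)

lemma \<theta>_nonneg: "0 \<le> \<theta>" and \<theta>_le_1: "\<theta> \<le> 1"
  using \<beta> decay by (simp_all add: \<theta>_def K_def)

lemma card_few_even_steps_decay:
  assumes "r \<le> u" "K * u \<le> n"
  shows "real (card {B \<in> polys_of_degree n. even_steps B (K * u) < q * u}) \<le> 2 ^ n * \<theta> ^ r"
proof -
  have "\<beta> ^ (q * u) * ((1 + 1 / \<beta>) / 2) ^ (K * u) = \<theta> ^ u"
    by (simp add: \<theta>_def power_mult power_mult_distrib)
  also have "\<dots> \<le> \<theta> ^ r"
    by (rule power_decreasing[OF assms(1) \<theta>_nonneg \<theta>_le_1])
  finally show ?thesis
    using card_few_even_steps[OF assms(2) \<beta>, of "q * u"] by (simp add: order_trans)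
qed

text \<open>Above degree \<open>K r\<close>, spend \<open>K u\<close> steps (\<open>u = n div K\<close>) waiting for \<open>q u\<close> even
  steps: failing to see them is rare (\<open>card_few_even_steps_decay\<close>), and otherwise the
  problem reduces to degree \<open>n - q u\<close> at the cost of \<open>K u = (K / q) q u\<close> steps.\<close>
lemma card_slow_step:
  assumes "K * r \<le> n"
  defines "u \<equiv> n div K"
  shows "real (card (slow n W (budget n)))
           \<le> W * (2 ^ n * \<theta> ^ r)
             + 2 ^ (q * u) * real (card (slow (n - q * u) (W + K * u) (budget (n - q * u))))"
proof -
  have "r \<le> u" unfolding u_def using assms(1) K_pos
    by (simp add: less_eq_div_iff_mult_less_eq mult.commute)
  have "q * u \<le> K * u" by (simp add: K_def)
  have "K * u \<le> n" by (simp add: u_def)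
  then have "q * u \<le> n" using \<open>q * u \<le> K * u\<close> by linarith
  then have budget: "budget n = real (K * u) + budget (n - q * u)"
    using q_pos by (simp add: budget_def of_nat_diff field_simps)
  have "real (card (slow n W (budget n)))
      \<le> real (W * card {B \<in> polys_of_degree n. even_steps B (K * u) < q * u}
         + 2 ^ (q * u) * card (slow (n - q * u) (W + K * u) (budget (n - q * u))))"
    using card_slow_recursion[OF \<open>q * u \<le> K * u\<close> \<open>K * u \<le> n\<close>]
    unfolding budget of_nat_le_iff .
  also have "\<dots> = W * real (card {B \<in> polys_of_degree n. even_steps B (K * u) < q * u})
      + 2 ^ (q * u) * real (card (slow (n - q * u) (W + K * u) (budget (n - q * u))))"
    by simp
  also have "\<dots> \<le> W * (2 ^ n * \<theta> ^ r)
      + 2 ^ (q * u) * real (card (slow (n - q * u) (W + K * u) (budget (n - q * u))))"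
    using card_few_even_steps_decay[OF \<open>r \<le> u\<close> \<open>K * u \<le> n\<close>]
    by (intro add_right_mono mult_left_mono) simp_all
  finally show ?thesis .
qed

lemma card_slow:
  "real (card (slow n W (budget n))) \<le> 2 ^ n * (real W + 3 * real n) * real n * \<theta> ^ r"
proof (induction n arbitrary: W rule: less_induct)
  case (less n)
  show ?case
  proof (cases "n < K * r")
    case True
    then have "real (n + 1) \<le> real (K * r)" by (simp only: of_nat_le_iff)
    then have "real (n + 1) ^ 2 \<le> real (K * r) ^ 2" by (rule power_mono) simp
    then have "real ((n + 1)^2) \<le> budget n"
      unfolding budget_def of_nat_power by (intro add_increasing) simp_all
    then show ?thesis using \<theta>_nonneg by (simp add: slow_eq_empty)
  next
    case False
    define u where "u = n div K"
    define m where "m = n - q * u"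
    have "r \<le> u" unfolding u_def using False K_pos
      by (simp add: less_eq_div_iff_mult_less_eq mult.commute)
    then have "1 \<le> q * u" using q_pos r_pos by simp
    have "K * u \<le> n" by (simp add: u_def)
    moreover have "K * u = 2 * (q * u) + u" by (simp add: K_def algebra_simps)
    moreover have "u \<le> q * u" using q_pos by simp
    ultimately have "m < n" "n = m + q * u" "K * u + 3 * m \<le> 3 * n"
      using \<open>1 \<le> q * u\<close> unfolding m_def by linarith+
    have "W + (W + K * u + 3 * m) * m \<le> W + (W + 3 * n) * m"
      using \<open>K * u + 3 * m \<le> 3 * n\<close> by simp
    also have "\<dots> \<le> (W + 3 * n) * n"
      using mult_le_mono2[of "Suc m" n "W + 3 * n"] \<open>m < n\<close> by simp
    finally have arith: "W + (W + K * u + 3 * m) * m \<le> (W + 3 * n) * n" .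
    have "real (card (slow n W (budget n)))
        \<le> W * (2 ^ n * \<theta> ^ r) + 2 ^ (q * u) * real (card (slow m (W + K * u) (budget m)))"
      using card_slow_step False by (simp add: u_def m_def)
    also have "\<dots> \<le> W * (2 ^ n * \<theta> ^ r)
        + 2 ^ (q * u) * (2 ^ m * (real (W + K * u) + 3 * real m) * real m * \<theta> ^ r)"
      using less.IH[OF \<open>m < n\<close>, of "W + K * u"] by (intro add_left_mono mult_left_mono) simp_all
    also have "\<dots> = 2 ^ n * real (W + (W + K * u + 3 * m) * m) * \<theta> ^ r"
      by (simp add: \<open>n = m + q * u\<close> power_add algebra_simps)
    also have "\<dots> \<le> 2 ^ n * real ((W + 3 * n) * n) * \<theta> ^ r"
      using arith \<theta>_nonneg by (intro mult_right_mono mult_left_mono of_nat_mono) simp_all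
    finally show ?thesis by simp
  qed
qed

lemma sum_tau_poly_le:
  assumes "1 \<le> n"
  shows "(\<Sum>P\<in>polys_of_degree n. real (tau_poly P)) \<le> 2 ^ n * (budget n + 16 * real n ^ 4 * \<theta> ^ r)"
proof -
  define t where "t = budget n"
  have "t \<ge> 0" by (simp add: t_def budget_def)
  have bound: "real (tau_poly P) \<le> real ((n + 1)^2)" if "P \<in> polys_of_degree n" for P
    using tau_poly_le_square_polys_of_degree[OF that] by (simp only: of_nat_le_iff)
  have "{P \<in> polys_of_degree n. t < real (tau_poly P)} = slow n 1 t"
    by (auto simp: slow_def xdiv_def)
  then have "(\<Sum>P\<in>polys_of_degree n. real (tau_poly P))
      \<le> real (card (polys_of_degree n)) * t + real (card (slow n 1 t)) * real ((n + 1)^2)"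
    using sum_le_threshold[where A = "polys_of_degree n" and f = "\<lambda>P. real (tau_poly P)",
        OF finite_polys_of_degree \<open>t \<ge> 0\<close> bound] by simp
  also have "real (card (slow n 1 t)) \<le> 2 ^ n * (1 + 3 * real n) * real n * \<theta> ^ r"
    using card_slow[of n 1] by (simp add: t_def)
  then have "real (card (polys_of_degree n)) * t + real (card (slow n 1 t)) * real ((n + 1)^2)
      \<le> 2 ^ n * t + (2 ^ n * (1 + 3 * real n) * real n * \<theta> ^ r) * real ((n + 1)^2)"
    using \<open>t \<ge> 0\<close> by (intro add_mono mult_right_mono) (simp_all add: card_polys_of_degree)
  also have "(2 ^ n * (1 + 3 * real n) * real n * \<theta> ^ r) * real ((n + 1)^2)
      = (2 ^ n * \<theta> ^ r) * ((1 + 3 * real n) * real n * (real n + 1)^2)"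
    by (simp add: algebra_simps)
  also have "\<dots> \<le> (2 ^ n * \<theta> ^ r) * ((4 * real n) * real n * (2 * real n)^2)"
    using assms \<theta>_nonneg by (intro mult_left_mono mult_mono power_mono) simp_all
  also have "\<dots> = 2 ^ n * (16 * real n ^ 4 * \<theta> ^ r)"
    by (simp add: power2_eq_square power4_eq_xxxx)
  finally show ?thesis by (simp add: t_def algebra_simps)
qed

end

section \<open>Choice of the parameters\<close>

lemma power_times_geometric_tendsto_0:
  fixes \<theta> :: real
  assumes "0 \<le> \<theta>" "\<theta> < 1"
  shows "(\<lambda>r. real r ^ k * \<theta> ^ r) \<longlonglongrightarrow> 0"
proof (cases "k = 0")
  case False
  define \<rho> where "\<rho> = root k \<theta>"
  have "0 \<le> \<rho>" "\<rho> < 1" using assms False by (simp_all add: \<rho>_def)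
  then have "(\<lambda>r. real r * \<rho> ^ r) \<longlonglongrightarrow> 0" by (intro powser_times_n_limit_0) simp
  then have "(\<lambda>r. (real r * \<rho> ^ r) ^ k) \<longlonglongrightarrow> 0 ^ k" by (rule tendsto_power)
  moreover have "(0::real) ^ k = 0" using False by simp
  moreover have "(real r * \<rho> ^ r) ^ k = real r ^ k * (\<rho> ^ k) ^ r" for r
    by (simp add: power_mult_distrib mult.commute flip: power_mult)
  moreover have "\<rho> ^ k = \<theta>" using assms False by (simp add: \<rho>_def real_root_pow_pos2)
  ultimately show ?thesis by simp
qed (use assms in \<open>simp add: LIMSEQ_power_zero\<close>)

text \<open>\<open>\<beta> ^ q * ((1 + 1 / \<beta>) / 2) ^ (2 * q + 1)\<close> equals \<open>1\<close> at \<open>\<beta> = 1\<close>, with derivative \<open>-1/2\<close>.\<close>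
lemma exists_decay_base:
  "\<exists>\<beta>::real. 1 \<le> \<beta> \<and> \<beta> ^ q * ((1 + 1 / \<beta>) / 2) ^ (2 * q + 1) < 1"
proof -
  define f where "f = (\<lambda>x::real. x ^ q * ((1 + 1 / x) / 2) ^ (2 * q + 1))"
  have "(f has_real_derivative - 1 / 2) (at 1)"
    unfolding f_def by (rule derivative_eq_intros refl | simp)+ (simp add: field_simps)
  then obtain d where "d > 0" and d: "\<And>h. 0 < h \<Longrightarrow> h < d \<Longrightarrow> f (1 + h) < f 1"
    by (auto dest: DERIV_neg_dec_right)
  then have "f (1 + d / 2) < 1" by (simp add: f_def)
  then show ?thesis using \<open>d > 0\<close> by (intro exI[of _ "1 + d / 2"]) (simp add: f_def)
qed

lemma exists_square_scale:
  fixes c :: real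
  assumes "0 < c" "1 \<le> R"
  shows "\<exists>n0. \<forall>n\<ge>n0. \<exists>r\<ge>R. c * real r ^ 2 \<le> real n \<and> real n \<le> 4 * c * real r ^ 2"
proof -
  have "\<exists>r\<ge>R. c * real r ^ 2 \<le> real n \<and> real n \<le> 4 * c * real r ^ 2"
    if n: "nat \<lceil>c * (real R + 1)^2\<rceil> \<le> n" for n
  proof -
    define x where "x = sqrt (real n / c)"
    define r where "r = nat \<lfloor>x\<rfloor>"
    have "0 \<le> real n / c" using assms(1) by (intro divide_nonneg_pos) simp_all
    then have "x \<ge> 0" and x2: "x^2 = real n / c" by (simp_all add: x_def)
    then have r: "real r \<le> x" "x < real r + 1" by (simp_all add: r_def)
    have "c * x^2 = real n" using x2 assms(1) by simp
    have "(real R + 1)^2 \<le> real n / c" using n assms(1) by (simp add: field_simps)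
    then have "real R + 1 \<le> x" unfolding x_def by (rule real_le_rsqrt)
    then have "R \<le> r" using r by linarith
    moreover have "c * real r ^ 2 \<le> real n"
      unfolding \<open>c * x^2 = real n\<close>[symmetric] using r assms(1)
      by (intro mult_left_mono power_mono) auto
    moreover have "real n \<le> c * (2 * real r) ^ 2"
      unfolding \<open>c * x^2 = real n\<close>[symmetric] using r \<open>x \<ge> 0\<close> \<open>R \<le> r\<close> assms
      by (intro mult_left_mono power_mono) auto
    ultimately show ?thesis
      by (auto simp: power_mult_distrib)
  qed
  then show ?thesis by blast
qed

context decay_parameters
begin

lemma sum_tau_poly_le_eps:
  assumes "1 \<le> n" "1 / q \<le> \<epsilon>" "real (K * r) ^ 2 \<le> \<epsilon> * n / 2" "16 * real n ^ 4 * \<theta> ^ r \<le> \<epsilon> * n / 2"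
  shows "(\<Sum>P\<in>polys_of_degree n. real (tau_poly P)) \<le> 2 * (1 + \<epsilon>) * real n * 2 ^ n"
proof -
  have "real K / real q = 2 + 1 / q" using q_pos by (simp add: K_def field_simps)
  then have "real K / real q * n \<le> (2 + \<epsilon>) * n" using assms(2) by (intro mult_right_mono) simp_all
  then have "budget n + 16 * real n ^ 4 * \<theta> ^ r \<le> 2 * (1 + \<epsilon>) * real n"
    using assms(3,4) by (simp add: budget_def algebra_simps)
  then show ?thesis
    using sum_tau_poly_le[OF assms(1)] by (simp add: mult.commute order_trans)
qed

end

lemma power4_times_geometric_le:
  fixes c \<theta> \<epsilon> :: real
  assumes "0 < c" "0 \<le> \<theta>" "real n \<le> 4 * c * real r ^ 2"
    and "real r ^ 6 * \<theta> ^ r \<le> \<epsilon> / (2048 * c ^ 3)"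
  shows "16 * real n ^ 4 * \<theta> ^ r \<le> \<epsilon> * real n / 2"
proof -
  have "real n ^ 3 \<le> (4 * c * real r ^ 2) ^ 3" using assms(3) by (rule power_mono) simp
  also have "\<dots> = 64 * c ^ 3 * real r ^ 6" by (simp add: power_mult_distrib flip: power_mult)
  finally have "real n ^ 3 * \<theta> ^ r \<le> 64 * c ^ 3 * real r ^ 6 * \<theta> ^ r"
    using assms(2) by (intro mult_right_mono) simp_all
  also have "\<dots> = 64 * c ^ 3 * (real r ^ 6 * \<theta> ^ r)" by (simp add: mult.assoc)
  also have "\<dots> \<le> 64 * c ^ 3 * (\<epsilon> / (2048 * c ^ 3))"
    using assms(1,4) by (intro mult_left_mono) simp_all
  finally have "real n ^ 3 * \<theta> ^ r \<le> \<epsilon> / 32" using assms(1) by simp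
  then have "real n * (real n ^ 3 * \<theta> ^ r) \<le> real n * (\<epsilon> / 32)" by (rule mult_left_mono) simp
  moreover have "real n ^ 4 = real n * real n ^ 3" by (simp add: eval_nat_numeral)
  ultimately show ?thesis by (simp add: mult_ac)
qed

lemma sum_tau_poly_asymptotic:
  fixes \<epsilon> :: real
  assumes "\<epsilon> > 0"
  shows "\<exists>n0. \<forall>n\<ge>n0. (\<Sum>P\<in>polys_of_degree n. real (tau_poly P)) \<le> 2 * (1 + \<epsilon>) * real n * 2 ^ n"
proof -
  obtain q :: nat where "0 < q" "inverse (real q) < \<epsilon>"
    using ex_inverse_of_nat_less[OF assms] by blast
  then have "1 \<le> q" and "1 / q \<le> \<epsilon>" by (simp_all add: inverse_eq_divide)
  obtain \<beta> :: real where \<beta>: "1 \<le> \<beta>" "\<beta> ^ q * ((1 + 1 / \<beta>) / 2) ^ (2 * q + 1) < 1"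
    using exists_decay_base by blast
  define \<theta>0 where "\<theta>0 = \<beta> ^ q * ((1 + 1 / \<beta>) / 2) ^ (2 * q + 1)"
  define c where "c = 2 * real (2 * q + 1) ^ 2 / \<epsilon>"
    \<comment> \<open>so that \<open>c r^2 \<le> n\<close> gives \<open>(K r)^2 \<le> \<epsilon> n / 2\<close>\<close>
  have "0 \<le> \<theta>0" "\<theta>0 < 1" "0 < c" using \<beta> assms by (simp_all add: \<theta>0_def c_def)
  then have "\<forall>\<^sub>F r in sequentially. real r ^ 6 * \<theta>0 ^ r < \<epsilon> / (2048 * c ^ 3)"
    using assms by (intro order_tendstoD(2)[OF power_times_geometric_tendsto_0]) simp_all
  then obtain R where R: "\<forall>r\<ge>R. real r ^ 6 * \<theta>0 ^ r < \<epsilon> / (2048 * c ^ 3)"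
    by (auto simp: eventually_sequentially)
  obtain n0 where n0: "\<And>n. n0 \<le> n \<Longrightarrow>
      \<exists>r\<ge>max R 1. c * real r ^ 2 \<le> real n \<and> real n \<le> 4 * c * real r ^ 2"
    using exists_square_scale[OF \<open>0 < c\<close>, of "max R 1"] by auto
  have "(\<Sum>P\<in>polys_of_degree n. real (tau_poly P)) \<le> 2 * (1 + \<epsilon>) * real n * 2 ^ n"
    if n: "max n0 1 \<le> n" for n
  proof -
    obtain r where r: "max R 1 \<le> r" "c * real r ^ 2 \<le> real n" "real n \<le> 4 * c * real r ^ 2"
      using n0[of n] n by auto
    interpret decay_parameters q \<beta> r
      using \<open>1 \<le> q\<close> \<beta> r(1) by unfold_locales simp_all
    have "\<theta> = \<theta>0" by (simp add: \<theta>_def \<theta>0_def K_def)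
    have "real (K * r) ^ 2 = real K ^ 2 * real r ^ 2" by (simp add: power_mult_distrib)
    also have "\<dots> = \<epsilon> * (c * real r ^ 2) / 2" using assms by (simp add: c_def K_def)
    also have "\<dots> \<le> \<epsilon> * real n / 2" using assms r(2) by simp
    finally have "real (K * r) ^ 2 \<le> \<epsilon> * real n / 2" .
    moreover have "16 * real n ^ 4 * \<theta> ^ r \<le> \<epsilon> * real n / 2"
      using power4_times_geometric_le[OF \<open>0 < c\<close> \<open>0 \<le> \<theta>0\<close> r(3)] R r(1) \<open>\<theta> = \<theta>0\<close> by auto
    ultimately show ?thesis
      using sum_tau_poly_le_eps \<open>1 / q \<le> \<epsilon>\<close> n by simp
  qed
  then show ?thesis by blast
qed

section \<open>Back to Laurent series\<close>

unbundle fps_syntax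

lemma coeff_poly_part: "coeff (poly_part r) i = r $$ (- int i)"
proof (cases "i < nat (degL r) + 1")
  case False
  then have "- int i < fls_subdegree r" by (simp add: degL_def)
  then show ?thesis using False by (simp add: poly_part_def nth_default_def)
qed (simp add: poly_part_def nth_default_def coeffL_def del: upt_Suc)

lemma poly_part_add: "poly_part (f + g) = poly_part f + poly_part g"
  by (rule poly_eqI) (simp add: coeff_poly_part)

lemma poly_part_eq_0_iff: "poly_part f = 0 \<longleftrightarrow> f = 0 \<or> 0 < fls_subdegree f"
proof
  assume "poly_part f = 0"
  then have vanish: "f $$ (- int i) = 0" for i using coeff_poly_part[of f i] by simp
  show "f = 0 \<or> 0 < fls_subdegree f"
  proof (rule ccontr)
    assume "\<not> (f = 0 \<or> 0 < fls_subdegree f)"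
    then have "f $$ (- int (nat (- fls_subdegree f))) \<noteq> 0" by simp
    then show False using vanish by blast
  qed
qed (auto simp: poly_eq_iff coeff_poly_part)

lemma poly_part_0 [simp]: "poly_part 0 = 0"
  by (simp add: poly_part_eq_0_iff)

lemma fls_subdegree_xL_plus_1: "fls_subdegree (xL + 1 :: F2L) = -1"
  by (rule fls_subdegree_eqI) (auto simp: xL_def)

lemma xL_plus_1_nonzero: "(xL + 1 :: F2L) \<noteq> 0"
  using fls_subdegree_xL_plus_1 by (metis fls_zero_subdegree neg_one_neq_zero)

lemma fls_subdegree_divide_xL_plus_1:
  "f \<noteq> 0 \<Longrightarrow> fls_subdegree (f / (xL + 1)) = fls_subdegree f + 1"
  using xL_plus_1_nonzero by (simp add: fls_divide_subdegree fls_subdegree_xL_plus_1)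

lemma poly_part_divide_xL_plus_1: "poly_part f = 0 \<Longrightarrow> poly_part (f / (xL + 1)) = 0"
  by (cases "f = 0") (simp_all add: poly_part_eq_0_iff fls_subdegree_divide_xL_plus_1)

lemma poly_part_xL_mult_divide_xL_plus_1:
  assumes "poly_part f = 0"
  shows "poly_part (xL * f / (xL + 1)) = 0"
proof (cases "f = 0")
  case False
  then have "fls_subdegree (xL * f) = fls_subdegree f - 1" "xL * f \<noteq> 0" by (simp_all add: xL_def)
  then show ?thesis
    using assms False by (simp add: poly_part_eq_0_iff fls_subdegree_divide_xL_plus_1)
qed simp

lemma poly_part_inverse_xL_plus_1: "poly_part (1 / (xL + 1)) = 0"
  using fls_subdegree_divide_xL_plus_1[of 1] by (simp add: poly_part_eq_0_iff)

definition poly_F2L :: "bit poly \<Rightarrow> F2L" where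
  "poly_F2L p = Abs_fls (\<lambda>k. if k \<le> 0 then coeff p (nat (- k)) else 0)"

lemma poly_F2L_nth: "poly_F2L p $$ k = (if k \<le> 0 then coeff p (nat (- k)) else 0)"
proof -
  have "\<forall>n>degree p. (if - int n \<le> 0 then coeff p (nat (int n)) else 0) = 0"
    by (auto intro: coeff_eq_0)
  then show ?thesis unfolding poly_F2L_def by (subst nth_Abs_fls_nat_lower_bound) auto
qed

lemma poly_part_poly_F2L [simp]: "poly_part (poly_F2L p) = p"
  by (rule poly_eqI) (simp add: coeff_poly_part poly_F2L_nth)

lemma poly_F2L_add: "poly_F2L (p + q) = poly_F2L p + poly_F2L q"
  by (rule fls_eqI) (simp add: poly_F2L_nth)

lemma poly_F2L_1: "poly_F2L 1 = 1"
  by (rule fls_eqI) (simp add: poly_F2L_nth)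

lemma poly_F2L_pX_mult: "poly_F2L (pX * p) = xL * poly_F2L p"
proof (rule fls_eqI)
  fix k
  show "poly_F2L (pX * p) $$ k = (xL * poly_F2L p) $$ k"
    by (cases "k < 0") (auto simp: xL_def fls_X_inv_times_conv_shift poly_F2L_nth pX_def
        coeff_pCons nat_diff_distrib' split: nat.split)
qed

lemma poly_F2L_pX1_mult: "poly_F2L (pX1 * p) = (xL + 1) * poly_F2L p"
  by (simp add: pX1_eq distrib_right poly_F2L_add poly_F2L_pX_mult)

lemma F2L_add_self [simp]: "f + f = (0 :: F2L)"
  by (rule fls_eqI) simp

lemma F2L_two [simp]: "(2 :: F2L) = 0"
  by (simp only: one_add_one[symmetric] F2L_add_self)

lemma poly_part_S_map: "poly_part (S_map r) = S_poly (poly_part r)"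
proof -
  define p where "p = poly_part r"
  define f where "f = r + poly_F2L p"
  have f: "poly_part f = 0" by (simp add: f_def p_def poly_part_add)
  have r: "r = poly_F2L p + f" by (simp add: f_def add.left_commute)
  show ?thesis
  proof (cases "poly p 1 = 0")
    case True
    then have "poly_F2L p = (xL + 1) * poly_F2L (S_poly p)"
      using pX1_mult_S_poly[of p] by (simp flip: poly_F2L_pX1_mult)
    then have "r / (xL + 1) = poly_F2L (S_poly p) + f / (xL + 1)"
      using xL_plus_1_nonzero by (simp add: r add_divide_distrib)
    then show ?thesis
      using True by (simp add: S_map_def p_def poly_part_add poly_part_divide_xL_plus_1[OF f])
  next
    case False
    then have "(xL + 1) * poly_F2L (S_poly p) = xL * poly_F2L p + 1"
      using pX1_mult_S_poly[of p]
        by (simp add: poly_F2L_add poly_F2L_1 poly_F2L_pX_mult flip: poly_F2L_pX1_mult)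
    then have "xL * r = (xL + 1) * poly_F2L (S_poly p) + (1 + xL * f)"
      by (simp add: r distrib_left add.assoc)
    then have "xL * r / (xL + 1) = poly_F2L (S_poly p) + (1 / (xL + 1) + xL * f / (xL + 1))"
      using xL_plus_1_nonzero by (simp add: add_divide_distrib)
    then show ?thesis
      using False by (simp add: S_map_def p_def poly_part_add poly_part_inverse_xL_plus_1
          poly_part_xL_mult_divide_xL_plus_1[OF f])
  qed
qed

lemma poly_part_S_map_iter: "poly_part ((S_map ^^ k) r) = (S_poly ^^ k) (poly_part r)"
  by (induction k) (simp_all add: poly_part_S_map)

lemma tau_eq_tau_poly: "tau r = tau_poly (poly_part r)"
  by (simp add: tau_def tau_poly_def poly_part_S_map_iter)

section \<open>The measure \<open>mu n\<close>\<close>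

definition coin_poly :: "nat \<Rightarrow> bool list \<Rightarrow> bit poly" where
  "coin_poly n v =
    Poly (map (\<lambda>i. if i = n then 1 else if v ! (n - 1 - i) then 1 else 0) [0..<Suc n])"

lemma coeff_coin_poly:
  "coeff (coin_poly n v) i = (if i = n then 1 else if i < n \<and> v ! (n - 1 - i) then 1 else 0)"
  by (cases "i < Suc n") (auto simp: coin_poly_def nth_default_def nth_map_upt simp del: upt_Suc)

lemma embedQ_nth:
  "embedQ n \<omega> $$ k = (if k = - int n then 1
     else if - int n < k then (if \<omega> (nat (k + int n - 1)) then 1 else 0) else 0)"
  unfolding embedQ_def by (subst nth_Abs_fls_nat_lower_bound[of n]) auto

lemma poly_part_embedQ: "poly_part (embedQ n \<omega>) = coin_poly n (map \<omega> [0..<n])"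
proof (rule poly_eqI)
  fix i
  have "i < n \<Longrightarrow> nat (- int i + int n - 1) = n - 1 - i" by simp
  then show "coeff (poly_part (embedQ n \<omega>)) i = coeff (coin_poly n (map \<omega> [0..<n])) i"
    by (cases "i < n") (auto simp: coeff_poly_part embedQ_nth coeff_coin_poly)
qed

lemma inj_embedQ: "inj (embedQ n)"
proof (rule injI)
  fix \<omega> \<omega>' assume eq: "embedQ n \<omega> = embedQ n \<omega>'"
  show "\<omega> = \<omega>'"
  proof
    fix i
    have "embedQ n \<omega> $$ (1 + int i - int n) = embedQ n \<omega>' $$ (1 + int i - int n)" using eq by simp
    then show "\<omega> i = \<omega>' i" by (auto simp: embedQ_nth split: if_splits)
  qed
qed

lemma coin_poly_polys_of_degree: "coin_poly n v \<in> polys_of_degree n"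
proof -
  have "coeff (coin_poly n v) n = 1" by (simp add: coeff_coin_poly)
  then have "n \<le> degree (coin_poly n v)" "coin_poly n v \<noteq> 0" by (auto intro: le_degree)
  moreover have "degree (coin_poly n v) \<le> n" by (rule degree_le) (auto simp: coeff_coin_poly)
  ultimately show ?thesis by (simp add: polys_of_degree_def)
qed

lemma bij_betw_coin_poly: "bij_betw (coin_poly n) {v. length v = n} (polys_of_degree n)"
proof -
  have inj: "inj_on (coin_poly n) {v. length v = n}"
  proof (rule inj_onI)
    fix v w assume "v \<in> {v. length v = n}" "w \<in> {v. length v = n}"
      and eq: "coin_poly n v = coin_poly n w"
    then show "v = w"
    proof (intro nth_equalityI)
      fix k assume "k < length v"
      then have "coeff (coin_poly n v) (n - 1 - k) = coeff (coin_poly n w) (n - 1 - k)"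
        "n - 1 - (n - 1 - k) = k" "n - 1 - k < n" using eq \<open>v \<in> _\<close> by auto
      then show "v ! k = w ! k" by (auto simp: coeff_coin_poly split: if_splits)
    qed simp
  qed
  moreover have "card {v :: bool list. length v = n} = 2 ^ n"
    using card_lists_length_eq[of "UNIV :: bool set" n] by simp
  ultimately have "coin_poly n ` {v. length v = n} = polys_of_degree n"
    using coin_poly_polys_of_degree
    by (intro card_subset_eq) (auto simp: card_image card_polys_of_degree)
  with inj show ?thesis by (simp add: bij_betw_def)
qed

definition coin_prefix :: "nat \<Rightarrow> bool list \<Rightarrow> (nat \<Rightarrow> bool) set" where
  "coin_prefix n v = {\<omega>. map \<omega> [0..<n] = v}"

lemma coin_prefix_eq_prod_emb:
  assumes "length v = n"
  shows "coin_prefix n v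
           = prod_emb UNIV (\<lambda>_. measure_pmf (bernoulli_pmf (1/2))) {..<n}
               (PiE {..<n} (\<lambda>i. {v ! i}))"
proof -
  have "map \<omega> [0..<n] = v \<longleftrightarrow> (\<forall>i<n. \<omega> i = v ! i)" for \<omega>
    using assms by (auto simp: list_eq_iff_nth_eq)
  then show ?thesis by (auto simp: coin_prefix_def prod_emb_def space_PiM PiE_iff restrict_def)
qed

lemma sets_coin_prefix: "length v = n \<Longrightarrow> coin_prefix n v \<in> sets coins"
  unfolding coins_def by (subst coin_prefix_eq_prod_emb) (auto intro!: sets_PiM_I)

lemma emeasure_coin_prefix:
  assumes "length v = n"
  shows "emeasure coins (coin_prefix n v) = ennreal ((1/2) ^ n)"
proof -
  have "emeasure coins (coin_prefix n v)
      = (\<Prod>i<n. emeasure (measure_pmf (bernoulli_pmf (1/2))) {v ! i})"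
    unfolding coins_def coin_prefix_eq_prod_emb[OF assms]
    by (rule emeasure_PiM_emb) (auto intro: prob_space_measure_pmf)
  also have "\<dots> = (\<Prod>i<n. ennreal (1/2))"
    by (rule prod.cong) (auto simp: emeasure_pmf_single split: if_splits)
  also have "\<dots> = ennreal (1/2) ^ n" by (simp only: prod_constant card_lessThan)
  also have "\<dots> = ennreal ((1/2) ^ n)" by (rule ennreal_power) simp
  finally show ?thesis .
qed

lemma coin_prefix_indicator_sum:
  fixes f :: "bool list \<Rightarrow> ennreal"
  shows "f (map \<omega> [0..<n]) = (\<Sum>v\<in>{v. length v = n}. f v * indicator (coin_prefix n v) \<omega>)"
proof -
  have "finite {v :: bool list. length v = n}"
    using finite_lists_length_eq[of "UNIV :: bool set" n] by simp
  then have "(\<Sum>v\<in>{v. length v = n}. f v * indicator (coin_prefix n v) \<omega>)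
      = (\<Sum>v\<in>{map \<omega> [0..<n]}. f v * indicator (coin_prefix n v) \<omega>)"
    by (intro sum.mono_neutral_right) (auto simp: coin_prefix_def)
  then show ?thesis by (simp add: coin_prefix_def)
qed

lemma
  fixes f :: "bool list \<Rightarrow> ennreal"
  shows measurable_coins_prefix: "(\<lambda>\<omega>. f (map \<omega> [0..<n])) \<in> borel_measurable coins"
    and nn_integral_coins_prefix:
      "(\<integral>\<^sup>+ \<omega>. f (map \<omega> [0..<n]) \<partial>coins) = (\<Sum>v\<in>{v. length v = n}. f v) * ennreal ((1/2) ^ n)"
proof -
  have meas: "(\<lambda>\<omega>. f v * indicator (coin_prefix n v) \<omega>) \<in> borel_measurable coins"
    if "v \<in> {v. length v = n}" for v
    using that
    by (intro borel_measurable_times_ennreal borel_measurable_indicator sets_coin_prefix) auto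
  show "(\<lambda>\<omega>. f (map \<omega> [0..<n])) \<in> borel_measurable coins"
    unfolding coin_prefix_indicator_sum[of f] by (rule borel_measurable_sum) (rule meas)
  have "(\<integral>\<^sup>+ \<omega>. f (map \<omega> [0..<n]) \<partial>coins)
      = (\<Sum>v\<in>{v. length v = n}. \<integral>\<^sup>+ \<omega>. f v * indicator (coin_prefix n v) \<omega> \<partial>coins)"
    unfolding coin_prefix_indicator_sum[of f] by (rule nn_integral_sum) (rule meas)
  also have "\<dots> = (\<Sum>v\<in>{v. length v = n}. f v * ennreal ((1/2) ^ n))"
    by (intro sum.cong)
      (auto simp: nn_integral_cmult_indicator sets_coin_prefix emeasure_coin_prefix)
  finally show "(\<integral>\<^sup>+ \<omega>. f (map \<omega> [0..<n]) \<partial>coins)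
      = (\<Sum>v\<in>{v. length v = n}. f v) * ennreal ((1/2) ^ n)"
    by (simp add: sum_distrib_right)
qed

lemma nn_integral_mu_tau:
  "(\<integral>\<^sup>+ r. ennreal (real (tau r)) \<partial>mu n)
     = ennreal ((\<Sum>P\<in>polys_of_degree n. real (tau_poly P)) * (1/2) ^ n)"
proof -
  define f where "f = (\<lambda>v. ennreal (real (tau_poly (coin_poly n v))))"
  have tau: "ennreal (real (tau (embedQ n \<omega>))) = f (map \<omega> [0..<n])" for \<omega>
    by (simp add: f_def tau_eq_tau_poly poly_part_embedQ)
  have "(\<integral>\<^sup>+ r. ennreal (real (tau r)) \<partial>mu n) = (\<integral>\<^sup>+ \<omega>. f (map \<omega> [0..<n]) \<partial>coins)"
    unfolding mu_def tau[symmetric]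
    by (intro nn_integral_embed_measure inj_embedQ measurable_embed_measure1)
      (simp add: tau measurable_coins_prefix)
  also have "\<dots> = (\<Sum>v\<in>{v. length v = n}. f v) * ennreal ((1/2) ^ n)"
    by (rule nn_integral_coins_prefix)
  also have "(\<Sum>v\<in>{v. length v = n}. f v)
      = ennreal (\<Sum>v\<in>{v. length v = n}. real (tau_poly (coin_poly n v)))"
    by (simp add: f_def)
  also have "(\<Sum>v\<in>{v. length v = n}. real (tau_poly (coin_poly n v)))
      = (\<Sum>P\<in>polys_of_degree n. real (tau_poly P))"
    by (rule sum.reindex_bij_betw[OF bij_betw_coin_poly])
  finally show ?thesis by (simp add: ennreal_mult'')
qed

theorem proposition2p12:
  fixes \<epsilon> :: real
  assumes "\<epsilon> > 0"
  shows "\<exists>n0::nat. \<forall>n\<ge>n0.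
           (\<integral>\<^sup>+ r. ennreal (real (tau r)) \<partial>(mu n)) \<le> ennreal (2 * (1 + \<epsilon>) * real n)"
proof -
  obtain n0 where n0: "\<And>n. n0 \<le> n \<Longrightarrow>
      (\<Sum>P\<in>polys_of_degree n. real (tau_poly P)) \<le> 2 * (1 + \<epsilon>) * real n * 2 ^ n"
    using sum_tau_poly_asymptotic[OF assms] by blast
  have "(\<integral>\<^sup>+ r. ennreal (real (tau r)) \<partial>(mu n)) \<le> ennreal (2 * (1 + \<epsilon>) * real n)"
    if "n0 \<le> n" for n
  proof -
    have "(\<Sum>P\<in>polys_of_degree n. real (tau_poly P)) * (1/2) ^ n \<le> 2 * (1 + \<epsilon>) * real n"
      using n0[OF that] by (simp add: field_simps)
    then show ?thesis by (simp add: nn_integral_mu_tau ennreal_leI)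
  qed
  then show ?thesis by blast
qed

end
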